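(* Fix $\delta\in(0,1)$. For $x$ large enough and any $\epsilon>0$, $$\sum_{\substack{x^{\delta}<d\le x\\ d\in \mathcal S(x,(\log x)^2)}}\frac{3^{\omega(d)}}{d}\ \ll\ x^{-\frac{\delta}{2}+\epsilon}.$$ Moreover, there is a positive constant $c$ such that for every positive integer $t$ with $x^{1/t}\ge(\log x)^2$, $$\sum_{\substack{x^{\delta}<d\le x\\ d\in \mathcal S(x,x^{1/t})}}\frac{3^{\omega(d)}}{d}\ \ll\ (\log x)^3\exp(-c\,t\log t).$$
   Context: For $x,y\ge1$, $\mathcal S(x,y)$ denotes the set of natural numbers less than $x$ all of whose prime factors are less than $y$ ($y$-smooth numbers). $\omega(d)$ denotes the number of distinct prime divisors of $d$. *)

theory Defs
  imports "HOL-Analysis.Analysis" "HOL-Computational_Algebra.Primes"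
begin

definition smooth_set :: "real \<Rightarrow> real \<Rightarrow> nat set" where
  "smooth_set x y = {n::nat. 1 \<le> n \<and> real n < x \<and> (\<forall>p\<in>prime_factors n. real p < y)}"

definition omega :: "nat \<Rightarrow> nat" where
  "omega d = card (prime_factors d)"

definition smooth_sum :: "real \<Rightarrow> real \<Rightarrow> real \<Rightarrow> real" where
  "smooth_sum \<delta> x y =
     (\<Sum>d\<in>{d. x powr \<delta> < real d \<and> real d \<le> x \<and> d \<in> smooth_set x y}.
        3 ^ omega d / real d)"

end

theory Submission
  imports Defs "HOL-Real_Asymp.Real_Asymp"
begin

(* Rankin's trick. For 0 <= alpha <= 1/2 every d > x^delta has 1 < (d / x^delta)^alpha, so the sum is
   at most x^(-delta alpha) times the sum of 3^omega(d) d^(alpha - 1) over S(x, y). Splitting d along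
   the 3-colourings of its prime factors bounds this by the cube of T, the sum of n^(alpha - 1) over
   S(x, y). Writing n^alpha as the divisor sum of the nonnegative multiplicative function h with
   h(p^k) = p^(k alpha) - p^((k - 1) alpha) and putting n = d b with b < x gives
   T <= (1 + ln x) prod_(p < y) (1 + sum_k h(p^k) / p^k) <= (1 + ln x) exp (4 sum_(p < y) (p^alpha - 1) / p),
   and p^alpha - 1 <= alpha p^alpha ln p together with Chebyshev's sum_(p <= y) ln p / p <= 2 ln y yields
   sum <= (1 + ln x)^3 exp (alpha (24 y^alpha ln y - delta ln x)).
   For y = (ln x)^2 take alpha slightly below 1/2; for y = x^(1/t) take y^alpha = delta t / 48 when t
   is large and alpha = 0 otherwise. *)

lemma sum_le_sum_inj_on:
  fixes g :: "'b \<Rightarrow> 'c::ordered_comm_monoid_add"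
  assumes "finite T" "inj_on j S" "j ` S \<subseteq> T" "\<And>w. w \<in> T \<Longrightarrow> 0 \<le> g w"
    "\<And>z. z \<in> S \<Longrightarrow> f z \<le> g (j z)"
  shows "sum f S \<le> sum g T"
proof -
  have "sum f S \<le> (\<Sum>z\<in>S. g (j z))" by (intro sum_mono assms(5))
  also have "\<dots> = sum g (j ` S)" using assms(2) by (simp add: sum.reindex)
  also have "\<dots> \<le> sum g T" using assms by (intro sum_mono2) auto
  finally show ?thesis .
qed

lemma nat_le_ceiling_of_less:
  assumes "real p < y"
  shows "p \<le> nat \<lceil>y\<rceil>"
proof -
  have "real p \<le> of_int \<lceil>y\<rceil>" using le_of_int_ceiling[of y] assms by linarith
  then show ?thesis by (simp add: le_nat_iff)
qed

lemma finite_nat_less_real: "finite {n::nat. real n < x}"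
  by (rule finite_subset[of _ "{..nat \<lceil>x\<rceil>}"]) (auto intro: nat_le_ceiling_of_less)

lemma sum_inverse_le_1_plus_ln:
  fixes x :: real
  assumes "x \<ge> 1"
  shows "(\<Sum>b\<in>{b::nat. 1 \<le> b \<and> real b < x}. 1 / real b) \<le> 1 + ln x"
proof -
  define n where "n = nat \<lfloor>x\<rfloor>"
  have n: "n \<ge> 1" "real n \<le> x" using assms by (simp_all add: n_def le_nat_iff)
  have "{b::nat. 1 \<le> b \<and> real b < x} \<subseteq> {1..n}"
    by (auto simp: n_def le_nat_iff le_floor_iff)
  then have "(\<Sum>b\<in>{b::nat. 1 \<le> b \<and> real b < x}. 1 / real b) \<le> (\<Sum>b\<in>{1..n}. 1 / real b)"
    by (intro sum_mono2) auto
  also have "\<dots> = harm n" by (simp add: harm_def divide_inverse)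
  also have "\<dots> \<le> 1 + ln (real n)"
    using euler_mascheroni_sequence_decreasing[of 1 n] n by (simp add: harm_def)
  also have "ln (real n) \<le> ln x" using n by simp
  finally show ?thesis by simp
qed

lemma sqrt_le_mult:
  fixes c s :: real
  assumes "0 < c" "(1 / c)^2 \<le> s"
  shows "sqrt s \<le> c * s"
proof -
  have "0 \<le> s" using assms(2) by (rule order_trans[OF zero_le_power2])
  have "1 / c \<le> sqrt s" using assms by (intro real_le_rsqrt)
  then have "1 \<le> c * sqrt s" using assms(1) by (simp add: field_simps)
  have "sqrt s * 1 \<le> sqrt s * (c * sqrt s)" using \<open>1 \<le> c * sqrt s\<close> \<open>0 \<le> s\<close> by (intro mult_left_mono) auto
  also have "\<dots> = c * s" using \<open>0 \<le> s\<close> by (simp add: mult.left_commute)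
  finally show ?thesis by simp
qed

lemma diff_one_le_mult_ln:
  fixes s :: real
  assumes "0 < s"
  shows "s - 1 \<le> s * ln s"
proof -
  have "ln (1 / s) \<le> 1 / s - 1" using assms by (intro ln_le_minus_one) auto
  then show ?thesis using assms by (simp add: ln_div field_simps)
qed

section \<open>Sums over primes\<close>

lemma sum_ln_prime_factors_le:
  fixes m :: nat
  assumes "m \<noteq> 0"
  shows "(\<Sum>p\<in>prime_factors m. ln (real p)) \<le> ln (real m)"
proof -
  have pos: "\<And>p. p \<in> prime_factors m \<Longrightarrow> real p > 0"
    by (meson in_prime_factors_imp_prime prime_gt_0_nat of_nat_0_less_iff)
  have "(\<Prod>p\<in>prime_factors m. p) \<le> (\<Prod>p\<in>prime_factors m. p ^ multiplicity p m)"
  proof (rule prod_mono)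
    fix p assume p: "p \<in> prime_factors m"
    then have "multiplicity p m > 0" using assms by (simp add: prime_factors_multiplicity)
    with pos[OF p] show "0 \<le> p \<and> p \<le> p ^ multiplicity p m" by (simp add: self_le_power)
  qed
  also have "\<dots> = m" using assms by (simp add: prod_prime_factors)
  finally have "(\<Prod>p\<in>prime_factors m. real p) \<le> real m"
    unfolding of_nat_prod[symmetric] of_nat_le_iff .
  then have "ln (\<Prod>p\<in>prime_factors m. real p) \<le> ln (real m)"
    using pos by (intro ln_mono prod_pos) auto
  also have "ln (\<Prod>p\<in>prime_factors m. real p) = (\<Sum>p\<in>prime_factors m. ln (real p))"
    using pos by (intro ln_prod) auto
  finally show ?thesis .
qed

lemma card_multiples_atLeastAtMost:
  fixes n p :: nat
  assumes "p > 0"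
  shows "card {m\<in>{1..n}. p dvd m} = n div p"
proof -
  have "{m\<in>{1..n}. p dvd m} = (\<lambda>j. j * p) ` {1..n div p}"
  proof (intro subset_antisym subsetI)
    fix m assume "m \<in> {m\<in>{1..n}. p dvd m}"
    then obtain j where "m = j * p" "1 \<le> m" "m \<le> n" by (auto elim!: dvdE simp: mult.commute)
    with assms show "m \<in> (\<lambda>j. j * p) ` {1..n div p}"
      by (auto simp: less_eq_div_iff_mult_less_eq)
  qed (use assms in \<open>auto simp: less_eq_div_iff_mult_less_eq\<close>)
  moreover have "inj_on (\<lambda>j. j * p) {1..n div p}" using assms by (auto simp: inj_on_def)
  ultimately show ?thesis by (simp add: card_image)
qed

lemma le_2_mult_div:
  fixes n p :: nat
  assumes "0 < p" "p \<le> n"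
  shows "n \<le> 2 * (n div p) * p"
proof -
  have "1 \<le> n div p" using assms by (simp add: less_eq_div_iff_mult_less_eq)
  then have "p \<le> n div p * p" by simp
  moreover have "n < n div p * p + p"
    using assms mod_less_divisor[of p n] div_mult_mod_eq[of n p] by linarith
  ultimately show ?thesis by linarith
qed

text \<open>Double counting the pairs \<open>(p, m)\<close> with \<open>p\<close> prime and \<open>p | m \<le> n\<close>.\<close>
lemma sum_ln_prime_mult_div_le:
  fixes n :: nat
  shows "(\<Sum>p\<in>{p. prime p \<and> p \<le> n}. ln (real p) * real (n div p)) \<le> real n * ln (real n)"
proof -
  define P where "P = {p. prime p \<and> p \<le> n}"
  have count: "(\<Sum>m\<in>{1..n}. if p dvd m then ln (real p) else 0) = ln (real p) * real (n div p)"
    if "p \<in> P" for p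
  proof -
    have "p > 0" using that by (simp add: P_def prime_gt_0_nat)
    have "(\<Sum>m\<in>{1..n}. if p dvd m then ln (real p) else 0) = (\<Sum>m\<in>{m\<in>{1..n}. p dvd m}. ln (real p))"
      by (simp only: sum.inter_filter[OF finite_atLeastAtMost])
    also have "\<dots> = real (card {m\<in>{1..n}. p dvd m}) * ln (real p)"
      by (rule sum_constant)
    finally show ?thesis
      by (simp only: card_multiples_atLeastAtMost[OF \<open>p > 0\<close>] mult.commute)
  qed
  have "(\<Sum>p\<in>P. ln (real p) * real (n div p))
        = (\<Sum>p\<in>P. \<Sum>m\<in>{1..n}. if p dvd m then ln (real p) else 0)"
    by (rule sum.cong[OF refl], rule count[symmetric])
  also have "\<dots> = (\<Sum>m\<in>{1..n}. \<Sum>p\<in>P. if p dvd m then ln (real p) else 0)"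
    by (rule sum.swap)
  also have "\<dots> = (\<Sum>m\<in>{1..n}. \<Sum>p\<in>prime_factors m. ln (real p))"
  proof (rule sum.cong[OF refl])
    fix m assume "m \<in> {1..n}"
    then have "prime_factors m = {p\<in>P. p dvd m}"
      by (auto simp: P_def prime_factors_dvd dest: dvd_imp_le)
    moreover have "finite P" by (simp add: P_def)
    ultimately show "(\<Sum>p\<in>P. if p dvd m then ln (real p) else 0) = (\<Sum>p\<in>prime_factors m. ln (real p))"
      by (simp only: sum.inter_filter)
  qed
  also have "\<dots> \<le> (\<Sum>m\<in>{1..n}. ln (real n))"
    by (intro sum_mono order_trans[OF sum_ln_prime_factors_le]) auto
  finally show ?thesis by (simp add: P_def)
qed

lemma sum_ln_prime_div_le:
  fixes n :: nat
  shows "(\<Sum>p\<in>{p. prime p \<and> p \<le> n}. ln (real p) / real p) \<le> 2 * ln (real n)"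
proof -
  define P where "P = {p. prime p \<and> p \<le> n}"
  have "real n / 2 * (ln (real p) / real p) \<le> ln (real p) * real (n div p)" if "p \<in> P" for p
  proof -
    have p: "p > 0" "p \<le> n" using that by (auto simp: P_def prime_gt_0_nat)
    have "real n \<le> 2 * real (n div p) * real p"
      using le_2_mult_div[OF p] of_nat_mono[where 'a = real] by fastforce
    then have "real n / real p / 2 \<le> real (n div p)" using p by (simp add: field_simps)
    from mult_left_mono[OF this, of "ln (real p)"] p show ?thesis
      by (simp add: field_simps)
  qed
  then have "real n / 2 * (\<Sum>p\<in>P. ln (real p) / real p) \<le> (\<Sum>p\<in>P. ln (real p) * real (n div p))"
    by (simp add: sum_distrib_left sum_mono)
  with sum_ln_prime_mult_div_le[of n]
  have "real n * (\<Sum>p\<in>P. ln (real p) / real p) \<le> real n * (2 * ln (real n))"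
    unfolding P_def by linarith
  moreover have "P = {}" if "n = 0" using that by (auto simp: P_def)
  ultimately show ?thesis
    unfolding P_def[symmetric] by (cases "n = 0") (auto simp: mult_le_cancel_left_pos)
qed

lemma finite_primes_less: "finite {p::nat. prime p \<and> real p < y}"
  by (rule finite_subset[OF _ finite_nat_less_real]) auto

lemma sum_primes_powr_minus_one_le:
  fixes y \<alpha> :: real
  assumes "y \<ge> 1" "0 \<le> \<alpha>"
  shows "(\<Sum>p\<in>{p. prime p \<and> real p < y}. (real p powr \<alpha> - 1) / real p) \<le> 2 * \<alpha> * y powr \<alpha> * ln y"
proof -
  define Y where "Y = {p::nat. prime p \<and> real p < y}"
  define n where "n = nat \<lfloor>y\<rfloor>"
  have n: "n \<ge> 1" "real n \<le> y" using assms by (simp_all add: n_def le_nat_iff)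
  have Y_sub: "Y \<subseteq> {p. prime p \<and> p \<le> n}" by (auto simp: Y_def n_def le_nat_iff le_floor_iff)
  have term_le: "(real p powr \<alpha> - 1) / real p \<le> \<alpha> * y powr \<alpha> * (ln (real p) / real p)"
    if "p \<in> Y" for p
  proof -
    have p: "real p \<ge> 1" "real p < y" using that by (auto simp: Y_def prime_gt_0_nat Suc_le_eq)
    define s where "s = real p powr \<alpha>"
    have s: "s > 0" "ln s = \<alpha> * ln (real p)" using p by (simp_all add: s_def ln_powr)
    have "s - 1 \<le> s * ln s" using s(1) by (rule diff_one_le_mult_ln)
    also have "\<dots> = s * (\<alpha> * ln (real p))" using s by simp
    also have "\<dots> \<le> y powr \<alpha> * (\<alpha> * ln (real p))"
      using p assms by (intro mult_right_mono) (auto simp: s_def powr_mono2)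
    finally have "real p powr \<alpha> - 1 \<le> \<alpha> * y powr \<alpha> * ln (real p)" by (simp add: s_def mult_ac)
    from divide_right_mono[OF this, of "real p"] p show ?thesis by simp
  qed
  have "(\<Sum>p\<in>Y. ln (real p) / real p) \<le> (\<Sum>p\<in>{p. prime p \<and> p \<le> n}. ln (real p) / real p)"
    using Y_sub by (intro sum_mono2) (auto simp: prime_gt_0_nat Suc_le_eq)
  also have "\<dots> \<le> 2 * ln (real n)" by (rule sum_ln_prime_div_le)
  also have "\<dots> \<le> 2 * ln y" using n by simp
  finally have sum_ln: "(\<Sum>p\<in>Y. ln (real p) / real p) \<le> 2 * ln y" .
  have "(\<Sum>p\<in>Y. (real p powr \<alpha> - 1) / real p) \<le> (\<Sum>p\<in>Y. \<alpha> * y powr \<alpha> * (ln (real p) / real p))"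
    by (rule sum_mono) (rule term_le)
  also have "\<dots> = \<alpha> * y powr \<alpha> * (\<Sum>p\<in>Y. ln (real p) / real p)"
    by (simp add: sum_distrib_left)
  also have "\<dots> \<le> \<alpha> * y powr \<alpha> * (2 * ln y)"
    using sum_ln assms by (intro mult_left_mono) auto
  finally show ?thesis by (simp add: Y_def mult_ac)
qed

section \<open>Euler products over exponent vectors\<close>

text \<open>For \<open>s = p powr \<alpha>\<close>, \<open>pow_incr s k = p powr (k \<alpha>) - p powr ((k - 1) \<alpha>)\<close> (and \<open>1\<close> for \<open>k = 0\<close>)
  is the value at \<open>p ^ k\<close> of the multiplicative function \<open>h\<close> with \<open>(\<Sum>d | d dvd n. h d) = n powr \<alpha>\<close>.\<close>
definition pow_incr :: "real \<Rightarrow> nat \<Rightarrow> real" where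
  "pow_incr s k = (if k = 0 then 1 else (s - 1) * s ^ (k - 1))"

lemma sum_pow_incr: "(\<Sum>k\<in>{0..m}. pow_incr s k) = s ^ m"
  by (induction m) (simp_all add: pow_incr_def algebra_simps)

lemma pow_incr_nonneg: "1 \<le> s \<Longrightarrow> 0 \<le> pow_incr s k"
  by (simp add: pow_incr_def)

lemma sum_pow_incr_div_power_le:
  fixes s q :: real
  assumes s: "1 \<le> s" "s \<le> 3/4 * q"
  shows "(\<Sum>k\<in>{0..K}. pow_incr s k / q ^ k) \<le> 1 + 4 * ((s - 1) / q)"
proof -
  define r where "r = s / q"
  have q: "q > 0" using s by linarith
  have r: "0 \<le> r" "r \<le> 3/4" using s q by (simp_all add: r_def field_simps)
  have geometric: "(\<Sum>j<K. r ^ j) \<le> 4"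
  proof -
    have "(\<Sum>j<K. r ^ j) = (1 - r ^ K) / (1 - r)" using r by (simp add: sum_gp_strict)
    also have "\<dots> \<le> 1 / (1 - r)" using r by (intro divide_right_mono) auto
    also have "\<dots> \<le> 4" using r by (simp add: field_simps)
    finally show ?thesis .
  qed
  have "(\<Sum>k\<in>{0..K}. pow_incr s k / q ^ k) = 1 + (\<Sum>j<K. pow_incr s (Suc j) / q ^ Suc j)"
    by (simp add: sum.atLeast_Suc_atMost sum.atLeast1_atMost_eq pow_incr_def)
  also have "(\<Sum>j<K. pow_incr s (Suc j) / q ^ Suc j) = (s - 1) / q * (\<Sum>j<K. r ^ j)"
    using q by (simp add: sum_distrib_left pow_incr_def r_def power_divide)
  also have "\<dots> \<le> (s - 1) / q * 4" using geometric s q by (intro mult_left_mono) auto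
  finally show ?thesis by (simp only: mult.commute)
qed

lemma prime_powr_le_three_quarters:
  fixes p :: nat and \<alpha> :: real
  assumes "prime p" "0 \<le> \<alpha>" "\<alpha> \<le> 1/2"
  shows "real p powr \<alpha> \<le> 3/4 * real p"
proof -
  have p: "real p \<ge> 2" using prime_ge_2_nat[OF assms(1)] by linarith
  have "real p powr \<alpha> \<le> real p powr (1/2)" using p assms by (intro powr_mono) auto
  also have "\<dots> = sqrt (real p)" by (simp add: powr_half_sqrt)
  also have "4/3 * sqrt (real p) \<le> sqrt (real p) * sqrt (real p)"
  proof (rule mult_right_mono)
    have "sqrt (16/9) \<le> sqrt (real p)" using p by (subst real_sqrt_le_iff) linarith
    then show "4/3 \<le> sqrt (real p)" by (simp add: real_sqrt_divide)
  qed simp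
  then have "sqrt (real p) \<le> 3/4 * real p" using p by simp
  finally show ?thesis .
qed

lemma multiplicity_le_self:
  fixes p n :: nat
  assumes "prime p" "n \<noteq> 0"
  shows "multiplicity p n \<le> n"
proof -
  have "multiplicity p n < 2 ^ multiplicity p n" by (rule less_exp)
  also have "\<dots> \<le> p ^ multiplicity p n" using prime_ge_2_nat[OF assms(1)] by (simp add: power_mono)
  also have "\<dots> \<le> n" using assms by (simp add: dvd_imp_le multiplicity_dvd)
  finally show ?thesis by simp
qed

definition of_exponents :: "nat set \<Rightarrow> (nat \<Rightarrow> nat) \<Rightarrow> nat" where
  "of_exponents Y u = (\<Prod>p\<in>Y. p ^ u p)"

lemma of_exponents_pos: "\<forall>p\<in>Y. prime p \<Longrightarrow> of_exponents Y u > 0"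
  unfolding of_exponents_def by (intro prod_pos) (auto simp: prime_gt_0_nat)

lemma multiplicity_of_exponents:
  assumes "finite Y" "\<forall>p\<in>Y. prime p" "prime q"
  shows "multiplicity q (of_exponents Y u) = (if q \<in> Y then u q else 0)"
  unfolding of_exponents_def using assms by (intro multiplicity_prod_prime_powers) auto

lemma of_exponents_multiplicity:
  assumes "finite Y" "\<forall>p\<in>Y. prime p" "n \<noteq> 0" "prime_factors n \<subseteq> Y"
  shows "of_exponents Y (\<lambda>p. multiplicity p n) = n"
proof -
  have "of_exponents Y (\<lambda>p. multiplicity p n) = (\<Prod>p\<in>prime_factors n. p ^ multiplicity p n)"
    unfolding of_exponents_def
    using assms by (intro prod.mono_neutral_right) (auto simp: prime_factors_multiplicity)
  also have "\<dots> = n" using assms by (simp add: prod_prime_factors)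
  finally show ?thesis .
qed

lemma of_exponents_dvd:
  assumes "finite Y" "\<forall>p\<in>Y. prime p" "\<forall>p\<in>Y. u p \<le> multiplicity p n"
  shows "of_exponents Y u dvd n"
proof (rule multiplicity_le_imp_dvd)
  show "of_exponents Y u \<noteq> 0" using of_exponents_pos[OF assms(2)] by simp
  fix q :: nat assume "prime q"
  then show "multiplicity q (of_exponents Y u) \<le> multiplicity q n"
    using assms by (simp add: multiplicity_of_exponents)
qed

lemma powr_eq_sum_pow_incr:
  fixes n :: nat and \<alpha> :: real
  assumes "finite Y" "\<forall>p\<in>Y. prime p" "n \<noteq> 0" "prime_factors n \<subseteq> Y"
  shows "real n powr \<alpha> =
           (\<Sum>u\<in>PiE Y (\<lambda>p. {0..multiplicity p n}). \<Prod>p\<in>Y. pow_incr (real p powr \<alpha>) (u p))"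
proof -
  have pos: "real p > 0" if "p \<in> Y" for p using assms that by (simp add: prime_gt_0_nat)
  have "(\<Sum>u\<in>PiE Y (\<lambda>p. {0..multiplicity p n}). \<Prod>p\<in>Y. pow_incr (real p powr \<alpha>) (u p))
        = (\<Prod>p\<in>Y. \<Sum>k\<in>{0..multiplicity p n}. pow_incr (real p powr \<alpha>) k)"
    using assms by (subst prod_sum_PiE) auto
  also have "\<dots> = (\<Prod>p\<in>Y. (real p ^ multiplicity p n) powr \<alpha>)"
  proof (intro prod.cong refl)
    fix p assume "p \<in> Y"
    then have "real p ^ multiplicity p n = real p powr real (multiplicity p n)"
      and "(real p powr \<alpha>) ^ multiplicity p n = real p powr (real (multiplicity p n) * \<alpha>)"
      using pos by (simp_all add: powr_realpow powr_power)
    then show "(\<Sum>k\<in>{0..multiplicity p n}. pow_incr (real p powr \<alpha>) k)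
               = (real p ^ multiplicity p n) powr \<alpha>"
      by (simp add: sum_pow_incr powr_powr)
  qed
  also have "\<dots> = real (of_exponents Y (\<lambda>p. multiplicity p n)) powr \<alpha>"
    by (simp add: of_exponents_def prod_powr_distrib)
  finally show ?thesis using of_exponents_multiplicity[OF assms] by simp
qed

text \<open>Each \<open>(n, d)\<close> with \<open>d | n\<close> is recovered from \<open>(d, n/d)\<close>, where \<open>d\<close> is written
  as an exponent vector and \<open>n/d < x\<close>.\<close>
lemma sum_divisor_vectors_le_product:
  fixes H :: "(nat \<Rightarrow> nat) \<Rightarrow> real" and x :: real
  assumes Y: "finite Y" "\<forall>p\<in>Y. prime p" and S: "\<And>n. n \<in> S \<Longrightarrow> 1 \<le> n \<and> real n < x"
    and H: "\<And>u. 0 \<le> H u"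
  shows "(\<Sum>n\<in>S. \<Sum>u\<in>PiE Y (\<lambda>p. {0..multiplicity p n}). H u / real n)
           \<le> (\<Sum>u\<in>PiE Y (\<lambda>_. {0..nat \<lceil>x\<rceil>}). H u / real (of_exponents Y u))
             * (\<Sum>b\<in>{b. 1 \<le> b \<and> real b < x}. 1 / real b)"
proof -
  define U where "U = (\<lambda>n. PiE Y (\<lambda>p. {0..multiplicity p n}))"
  define V where "V = PiE Y (\<lambda>_. {0..nat \<lceil>x\<rceil>})"
  define B where "B = {b::nat. 1 \<le> b \<and> real b < x}"
  have split: "u \<in> V \<and> n div of_exponents Y u \<in> B \<and> of_exponents Y u * (n div of_exponents Y u) = n"
    if n: "n \<in> S" and u: "u \<in> U n" for n u
  proof -
    have mult_le: "u p \<le> multiplicity p n" if "p \<in> Y" for p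
      using u that by (auto simp: U_def PiE_iff)
    have "u p \<le> nat \<lceil>x\<rceil>" if "p \<in> Y" for p
    proof -
      have "u p \<le> n" using mult_le[OF that] multiplicity_le_self[of p n] Y S[OF n] that by force
      then show ?thesis using S[OF n] by (intro order_trans[OF _ nat_le_ceiling_of_less]) auto
    qed
    then have "u \<in> V" using u by (auto simp: U_def V_def PiE_iff)
    moreover have dvd: "of_exponents Y u dvd n" using Y mult_le by (intro of_exponents_dvd) auto
    moreover have "n div of_exponents Y u \<in> B"
      using dvd S[OF n] by (auto simp: B_def Suc_le_eq dvd_div_eq_0_iff intro: le_less_trans[of _ "real n"])
    ultimately show ?thesis by simp
  qed
  have "finite S" using S by (intro finite_subset[OF _ finite_nat_less_real]) auto
  then have "(\<Sum>n\<in>S. \<Sum>u\<in>U n. H u / real n) = (\<Sum>(n, u)\<in>Sigma S U. H u / real n)"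
    using Y unfolding U_def by (intro sum.Sigma ballI finite_PiE) auto
  also have "\<dots> \<le> (\<Sum>(u, b)\<in>V \<times> B. H u / real (of_exponents Y u * b))"
  proof (rule sum_le_sum_inj_on[where j = "\<lambda>(n, u). (u, n div of_exponents Y u)"])
    show "finite (V \<times> B)" using Y unfolding V_def B_def
      by (intro finite_cartesian_product finite_PiE) (auto intro: finite_subset[OF _ finite_nat_less_real])
    show "inj_on (\<lambda>(n, u). (u, n div of_exponents Y u)) (Sigma S U)"
      by (rule inj_on_inverseI[where g = "\<lambda>(u, b). (of_exponents Y u * b, u)"]) (auto dest: split)
    show "(\<lambda>(n, u). (u, n div of_exponents Y u)) ` Sigma S U \<subseteq> V \<times> B"
      by (auto dest: split)
  qed (use H in \<open>auto simp: split simp flip: of_nat_mult\<close>)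
  also have "\<dots> = (\<Sum>u\<in>V. H u / real (of_exponents Y u)) * (\<Sum>b\<in>B. 1 / real b)"
    by (simp add: sum_product sum.cartesian_product)
  finally show ?thesis unfolding U_def V_def B_def .
qed

lemma sum_exponents_le_exp:
  fixes \<alpha> :: real
  assumes Y: "finite Y" "\<forall>p\<in>Y. prime p" and \<alpha>: "0 \<le> \<alpha>" "\<alpha> \<le> 1/2"
  shows "(\<Sum>u\<in>PiE Y (\<lambda>_. {0..K}).
            (\<Prod>p\<in>Y. pow_incr (real p powr \<alpha>) (u p)) / real (of_exponents Y u))
         \<le> exp (4 * (\<Sum>p\<in>Y. (real p powr \<alpha> - 1) / real p))"
proof -
  have "(\<Sum>u\<in>PiE Y (\<lambda>_. {0..K}).
            (\<Prod>p\<in>Y. pow_incr (real p powr \<alpha>) (u p)) / real (of_exponents Y u))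
        = (\<Sum>u\<in>PiE Y (\<lambda>_. {0..K}). \<Prod>p\<in>Y. pow_incr (real p powr \<alpha>) (u p) / real p ^ u p)"
    by (simp add: of_exponents_def prod_dividef)
  also have "\<dots> = (\<Prod>p\<in>Y. \<Sum>k\<in>{0..K}. pow_incr (real p powr \<alpha>) k / real p ^ k)"
    using Y by (subst prod_sum_PiE) auto
  also have "\<dots> \<le> (\<Prod>p\<in>Y. exp (4 * ((real p powr \<alpha> - 1) / real p)))"
  proof (rule prod_mono)
    fix p assume "p \<in> Y"
    then have p: "prime p" using Y by blast
    have s: "1 \<le> real p powr \<alpha>" using \<alpha> prime_ge_1_nat[OF p] by (simp add: ge_one_powr_ge_zero)
    have "0 \<le> (\<Sum>k\<in>{0..K}. pow_incr (real p powr \<alpha>) k / real p ^ k)"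
      using s by (intro sum_nonneg divide_nonneg_nonneg pow_incr_nonneg) auto
    moreover have "(\<Sum>k\<in>{0..K}. pow_incr (real p powr \<alpha>) k / real p ^ k)
                   \<le> 1 + 4 * ((real p powr \<alpha> - 1) / real p)"
      using s prime_powr_le_three_quarters[OF p \<alpha>] by (rule sum_pow_incr_div_power_le)
    moreover have "1 + 4 * ((real p powr \<alpha> - 1) / real p) \<le> exp (4 * ((real p powr \<alpha> - 1) / real p))"
      by (rule exp_ge_add_one_self)
    ultimately show "0 \<le> (\<Sum>k\<in>{0..K}. pow_incr (real p powr \<alpha>) k / real p ^ k)
        \<and> (\<Sum>k\<in>{0..K}. pow_incr (real p powr \<alpha>) k / real p ^ k)
          \<le> exp (4 * ((real p powr \<alpha> - 1) / real p))"
      by linarith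
  qed
  also have "\<dots> = exp (4 * (\<Sum>p\<in>Y. (real p powr \<alpha> - 1) / real p))"
    using Y by (simp add: exp_sum sum_distrib_left)
  finally show ?thesis .
qed

lemma finite_smooth_set: "finite (smooth_set x y)"
  unfolding smooth_set_def by (rule finite_subset[OF _ finite_nat_less_real]) auto

lemma smooth_set_dvd:
  assumes "n \<in> smooth_set x y" "d dvd n"
  shows "d \<in> smooth_set x y"
proof -
  have "n \<ge> 1" "real n < x" "\<forall>p\<in>prime_factors n. real p < y"
    using assms(1) by (auto simp: smooth_set_def)
  moreover from this have "d \<ge> 1" "d \<le> n" using assms(2) by (auto intro: dvd_imp_le)
  moreover have "prime_factors d \<subseteq> prime_factors n" using assms(2) \<open>n \<ge> 1\<close> by (intro dvd_prime_factors) auto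
  ultimately show ?thesis unfolding smooth_set_def by auto
qed

lemma sum_smooth_powr_le:
  fixes x y \<alpha> :: real
  assumes "x \<ge> 1" and \<alpha>: "0 \<le> \<alpha>" "\<alpha> \<le> 1/2"
  shows "(\<Sum>n\<in>smooth_set x y. real n powr (\<alpha> - 1))
           \<le> (1 + ln x) * exp (4 * (\<Sum>p\<in>{p. prime p \<and> real p < y}. (real p powr \<alpha> - 1) / real p))"
proof -
  define Y where "Y = {p. prime p \<and> real p < y}"
  define H where "H = (\<lambda>u. \<Prod>p\<in>Y. pow_incr (real p powr \<alpha>) (u p))"
  have Y: "finite Y" "\<forall>p\<in>Y. prime p" unfolding Y_def by (auto simp: finite_primes_less)
  have S: "n \<noteq> 0" "prime_factors n \<subseteq> Y" if "n \<in> smooth_set x y" for n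
    using that unfolding smooth_set_def Y_def by auto
  have H_nonneg: "H u \<ge> 0" for u
    unfolding H_def
  proof (intro prod_nonneg ballI pow_incr_nonneg ge_one_powr_ge_zero)
    fix p assume "p \<in> Y"
    then have "prime p" using Y by blast
    then show "1 \<le> real p" using prime_ge_1_nat[of p] by simp
  qed (rule \<alpha>)
  have "(\<Sum>n\<in>smooth_set x y. real n powr (\<alpha> - 1))
        = (\<Sum>n\<in>smooth_set x y. \<Sum>u\<in>PiE Y (\<lambda>p. {0..multiplicity p n}). H u / real n)"
  proof (rule sum.cong[OF refl])
    fix n assume n: "n \<in> smooth_set x y"
    then have "real n powr (\<alpha> - 1) = real n powr \<alpha> / real n" using S by (simp add: powr_diff)
    also have "\<dots> = (\<Sum>u\<in>PiE Y (\<lambda>p. {0..multiplicity p n}). H u / real n)"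
      using S[OF n] Y by (simp add: powr_eq_sum_pow_incr H_def sum_divide_distrib)
    finally show "real n powr (\<alpha> - 1) = (\<Sum>u\<in>PiE Y (\<lambda>p. {0..multiplicity p n}). H u / real n)" .
  qed
  also have "\<dots> \<le> (\<Sum>u\<in>PiE Y (\<lambda>_. {0..nat \<lceil>x\<rceil>}). H u / real (of_exponents Y u))
                 * (\<Sum>b\<in>{b. 1 \<le> b \<and> real b < x}. 1 / real b)"
    using Y H_nonneg by (intro sum_divisor_vectors_le_product) (auto simp: smooth_set_def)
  also have "\<dots> \<le> exp (4 * (\<Sum>p\<in>Y. (real p powr \<alpha> - 1) / real p)) * (1 + ln x)"
    using Y assms unfolding H_def
    by (intro mult_mono sum_exponents_le_exp sum_inverse_le_1_plus_ln) (auto intro: sum_nonneg)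
  finally show ?thesis unfolding Y_def by (simp only: mult.commute)
qed

section \<open>Colourings of prime factors\<close>

definition colour_part :: "nat \<Rightarrow> (nat \<Rightarrow> nat) \<Rightarrow> nat \<Rightarrow> nat" where
  "colour_part n c i = (\<Prod>p\<in>{p\<in>prime_factors n. c p = i}. p ^ multiplicity p n)"

lemma multiplicity_colour_part:
  assumes "prime p" "n \<noteq> 0"
  shows "multiplicity p (colour_part n c i) = (if p \<in> prime_factors n \<and> c p = i then multiplicity p n else 0)"
  unfolding colour_part_def using assms
  by (subst multiplicity_prod_prime_powers) (auto dest: in_prime_factors_imp_prime)

lemma colour_part_dvd:
  assumes "n \<noteq> 0"
  shows "colour_part n c i dvd n"
proof (rule multiplicity_le_imp_dvd)
  show "colour_part n c i \<noteq> 0"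
    unfolding colour_part_def by (auto simp: prime_factors_dvd)
  fix p :: nat assume "prime p"
  then show "multiplicity p (colour_part n c i) \<le> multiplicity p n"
    using assms by (simp add: multiplicity_colour_part)
qed

lemma prod_colour_parts:
  assumes "n \<noteq> 0" "c \<in> PiE (prime_factors n) (\<lambda>_. {..<k})"
  shows "(\<Prod>i<k. colour_part n c i) = n"
proof -
  have "(\<Prod>i<k. colour_part n c i) = (\<Prod>p\<in>prime_factors n. p ^ multiplicity p n)"
    unfolding colour_part_def using assms(2) by (intro prod.group) auto
  also have "\<dots> = n" using assms(1) by (simp add: prod_prime_factors)
  finally show ?thesis .
qed

lemma inj_on_colour_parts:
  assumes "0 \<notin> E"
  shows "inj_on (\<lambda>(n, c). \<lambda>i\<in>{..<k}. colour_part n c i)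
           (SIGMA n:E. PiE (prime_factors n) (\<lambda>_. {..<k}))"
proof (rule inj_onI, clarify)
  fix n c n' c'
  assume nc: "n \<in> E" "c \<in> PiE (prime_factors n) (\<lambda>_. {..<k})"
    "n' \<in> E" "c' \<in> PiE (prime_factors n') (\<lambda>_. {..<k})"
    and "(\<lambda>i\<in>{..<k}. colour_part n c i) = (\<lambda>i\<in>{..<k}. colour_part n' c' i)"
  then have parts: "colour_part n c i = colour_part n' c' i" if "i < k" for i
    using that by (auto dest: fun_cong[where x = i])
  have n0: "n \<noteq> 0" by (rule notI) (use assms nc(1) in simp)
  have "n' \<noteq> 0" by (rule notI) (use assms nc(3) in simp)
  then have "n = n'" using prod_colour_parts[of n c k] prod_colour_parts[of n' c' k] nc parts n0 by simp
  moreover have "c p = c' p" if "p \<in> prime_factors n" for p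
  proof -
    have "prime p" "c p < k" using that nc by (auto simp: PiE_iff)
    then have "multiplicity p (colour_part n c (c p)) > 0"
      using that n0 by (simp add: multiplicity_colour_part prime_factors_multiplicity)
    then have "multiplicity p (colour_part n c' (c p)) > 0"
      using parts[OF \<open>c p < k\<close>] \<open>n = n'\<close> by simp
    then show ?thesis
      using \<open>prime p\<close> n0 by (simp add: multiplicity_colour_part split: if_splits)
  qed
  ultimately show "n = n' \<and> c = c'" using nc by (auto intro: PiE_ext)
qed

text \<open>\<open>k ^ omega n\<close> counts the colourings of the prime factors of \<open>n\<close> with \<open>k\<close> colours; each one
  splits \<open>n\<close> into \<open>k\<close> divisors, from which it can be read off again.\<close>
lemma sum_pow_omega_le_power:
  fixes E :: "nat set" and f :: "nat \<Rightarrow> real" and k :: nat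
  assumes E: "finite E" "0 \<notin> E" "\<And>n d. n \<in> E \<Longrightarrow> d dvd n \<Longrightarrow> d \<in> E"
    and f: "f 1 = 1" "\<And>a b. f (a * b) = f a * f b" "\<And>n. 0 \<le> f n"
  shows "(\<Sum>n\<in>E. real k ^ omega n * f n) \<le> (\<Sum>n\<in>E. f n) ^ k"
proof -
  define C where "C = (\<lambda>n::nat. PiE (prime_factors n) (\<lambda>_. {..<k}))"
  define j where "j = (\<lambda>(n, c). \<lambda>i\<in>{..<k}. colour_part n c i)"
  have f_prod: "f (\<Prod>i\<in>I. a i) = (\<Prod>i\<in>I. f (a i))" if "finite I" for I and a :: "nat \<Rightarrow> nat"
    using that by (induction I rule: finite_induct) (simp_all add: f(2) f(1)[simplified])
  have n0: "n \<noteq> 0" if "n \<in> E" for n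
    by (rule notI) (use E(2) that in simp)
  have "(\<Sum>n\<in>E. real k ^ omega n * f n) = (\<Sum>n\<in>E. \<Sum>c\<in>C n. f n)"
    by (simp add: C_def omega_def card_PiE)
  also have "\<dots> = (\<Sum>(n, c)\<in>Sigma E C. f n)"
    using E(1) by (intro sum.Sigma) (auto simp: C_def intro: finite_PiE)
  also have "\<dots> \<le> (\<Sum>w\<in>PiE {..<k} (\<lambda>_. E). \<Prod>i<k. f (w i))"
  proof (rule sum_le_sum_inj_on[where j = j])
    show "finite (PiE {..<k} (\<lambda>_. E))" using E(1) by (simp add: finite_PiE)
    show "inj_on j (Sigma E C)" unfolding j_def C_def using E(2) by (rule inj_on_colour_parts)
    show "j ` Sigma E C \<subseteq> PiE {..<k} (\<lambda>_. E)"
    proof (rule image_subsetI, clarify)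
      fix n c assume "n \<in> E"
      then show "j (n, c) \<in> PiE {..<k} (\<lambda>_. E)"
        using E(3) colour_part_dvd n0 by (simp add: j_def)
    qed
  qed (use f in \<open>auto simp: j_def C_def f_prod[symmetric] prod_colour_parts n0 intro: prod_nonneg\<close>)
  also have "\<dots> = (\<Prod>i<k. \<Sum>n\<in>E. f n)"
    using E(1) by (subst prod_sum_PiE) auto
  also have "\<dots> = (\<Sum>n\<in>E. f n) ^ k"
    by simp
  finally show ?thesis .
qed

section \<open>Rankin's bound and its two regimes\<close>

lemma smooth_sum_le_rankin:
  fixes \<delta> x y \<alpha> :: real
  assumes "x > 0" "0 \<le> \<alpha>"
  shows "smooth_sum \<delta> x y
           \<le> x powr (- \<delta> * \<alpha>) * (\<Sum>n\<in>smooth_set x y. 3 ^ omega n * real n powr (\<alpha> - 1))"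
proof -
  define D where "D = {d. x powr \<delta> < real d \<and> real d \<le> x \<and> d \<in> smooth_set x y}"
  have term_le: "3 ^ omega d / real d \<le> x powr (- \<delta> * \<alpha>) * (3 ^ omega d * real d powr (\<alpha> - 1))"
    if "d \<in> D" for d
  proof -
    have d: "real d \<ge> 1" "x powr \<delta> < real d" using that by (auto simp: D_def smooth_set_def)
    have "x powr (\<delta> * \<alpha>) \<le> real d powr \<alpha>"
      using d assms by (simp add: powr_powr[symmetric] powr_mono2)
    then have "1 \<le> x powr (- \<delta> * \<alpha>) * real d powr \<alpha>"
      using assms by (simp add: powr_minus field_simps)
    from mult_left_mono[OF this, of "3 ^ omega d / real d"] d show ?thesis
      by (simp add: powr_diff field_simps)
  qed
  have "smooth_sum \<delta> x y = (\<Sum>d\<in>D. 3 ^ omega d / real d)"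
    by (simp add: smooth_sum_def D_def)
  also have "\<dots> \<le> (\<Sum>d\<in>D. x powr (- \<delta> * \<alpha>) * (3 ^ omega d * real d powr (\<alpha> - 1)))"
    by (rule sum_mono) (rule term_le)
  also have "\<dots> = x powr (- \<delta> * \<alpha>) * (\<Sum>d\<in>D. 3 ^ omega d * real d powr (\<alpha> - 1))"
    by (simp add: sum_distrib_left)
  also have "\<dots> \<le> x powr (- \<delta> * \<alpha>) * (\<Sum>n\<in>smooth_set x y. 3 ^ omega n * real n powr (\<alpha> - 1))"
    by (intro mult_left_mono sum_mono2 finite_smooth_set) (auto simp: D_def)
  finally show ?thesis .
qed

lemma smooth_sum_le:
  fixes \<delta> x y \<alpha> :: real
  assumes x: "x \<ge> 1" and y: "y \<ge> 1" and \<alpha>: "0 \<le> \<alpha>" "\<alpha> \<le> 1/2"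
  shows "smooth_sum \<delta> x y \<le> (1 + ln x) ^ 3 * exp (\<alpha> * (24 * y powr \<alpha> * ln y - \<delta> * ln x))"
proof -
  define T where "T = (\<Sum>n\<in>smooth_set x y. real n powr (\<alpha> - 1))"
  define P where "P = (\<Sum>p\<in>{p. prime p \<and> real p < y}. (real p powr \<alpha> - 1) / real p)"
  have T: "0 \<le> T" "T \<le> (1 + ln x) * exp (4 * P)"
    unfolding T_def P_def using sum_smooth_powr_le[OF x \<alpha>] by (auto intro: sum_nonneg)
  have power: "(\<Sum>n\<in>smooth_set x y. real 3 ^ omega n * real n powr (\<alpha> - 1)) \<le> T ^ 3"
    unfolding T_def
  proof (rule sum_pow_omega_le_power)
    show "0 \<notin> smooth_set x y" by (simp add: smooth_set_def)
  qed (auto simp: finite_smooth_set powr_mult intro: smooth_set_dvd)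
  have "smooth_sum \<delta> x y
        \<le> x powr (- \<delta> * \<alpha>) * (\<Sum>n\<in>smooth_set x y. 3 ^ omega n * real n powr (\<alpha> - 1))"
    using x \<alpha> by (intro smooth_sum_le_rankin) auto
  also have "\<dots> \<le> x powr (- \<delta> * \<alpha>) * T ^ 3"
    using power by (intro mult_left_mono) simp_all
  also have "\<dots> \<le> x powr (- \<delta> * \<alpha>) * ((1 + ln x) * exp (4 * P)) ^ 3"
    using T by (intro mult_left_mono power_mono) auto
  also have "\<dots> = (1 + ln x) ^ 3 * (exp (- \<delta> * \<alpha> * ln x) * exp (4 * P) ^ 3)"
    using x by (simp add: powr_def power_mult_distrib)
  also have "exp (4 * P) ^ 3 = exp (12 * P)" by (simp flip: exp_of_nat_mult)
  also have "exp (- \<delta> * \<alpha> * ln x) * exp (12 * P) = exp (- \<delta> * \<alpha> * ln x + 12 * P)"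
    by (rule exp_add[symmetric])
  also have "(1 + ln x) ^ 3 * \<dots> \<le> (1 + ln x) ^ 3 * exp (\<alpha> * (24 * y powr \<alpha> * ln y - \<delta> * ln x))"
    using sum_primes_powr_minus_one_le[OF y \<alpha>(1)] x
    by (intro mult_left_mono) (auto simp: P_def algebra_simps)
  finally show ?thesis .
qed

lemma smooth_sum_log_squared_le:
  fixes \<delta> \<theta> x :: real
  assumes "0 \<le> \<theta>" "\<theta> \<le> 1" and x: "x \<ge> exp 1"
  shows "smooth_sum \<delta> x ((ln x)^2)
           \<le> exp (3 * ln (1 + ln x) + 24 * ln x powr (1 - \<theta>) * ln (ln x) - \<delta> * (1 - \<theta>) / 2 * ln x)"
proof -
  define L where "L = ln x"
  define \<alpha> where "\<alpha> = (1 - \<theta>) / 2"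
  have "1 \<le> x" by (rule order_trans[OF _ x]) simp
  have "x > 0" using x by (rule less_le_trans[OF exp_gt_zero])
  then have L: "L \<ge> 1" using x by (simp add: L_def ln_ge_iff)
  have "(L^2) powr \<alpha> = (L powr 2) powr \<alpha>" using L by (simp add: powr_numeral)
  also have "\<dots> = L powr (2 * \<alpha>)" by (simp add: powr_powr)
  also have "2 * \<alpha> = 1 - \<theta>" by (simp add: \<alpha>_def)
  finally have y: "(L^2) powr \<alpha> = L powr (1 - \<theta>)" "ln (L^2) = 2 * ln L"
    using L by (simp_all add: ln_realpow)
  have exponent: "\<alpha> * (24 * (L^2) powr \<alpha> * ln (L^2) - \<delta> * L)
                  \<le> 24 * L powr (1 - \<theta>) * ln L - \<delta> * (1 - \<theta>) / 2 * L"
    using y L assms by (simp add: \<alpha>_def algebra_simps mult_right_mono)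
  have "smooth_sum \<delta> x (L^2) \<le> (1 + L) ^ 3 * exp (\<alpha> * (24 * (L^2) powr \<alpha> * ln (L^2) - \<delta> * L))"
    unfolding L_def using L \<open>1 \<le> x\<close> assms by (intro smooth_sum_le) (auto simp: \<alpha>_def L_def)
  also have "\<dots> \<le> (1 + L) ^ 3 * exp (24 * L powr (1 - \<theta>) * ln L - \<delta> * (1 - \<theta>) / 2 * L)"
    using exponent L by (intro mult_left_mono) auto
  also have "(1 + L) ^ 3 = exp (3 * ln (1 + L))"
    using L by (subst powr_numeral[symmetric]) (simp_all add: powr_def)
  finally show ?thesis unfolding L_def by (simp add: exp_add[symmetric] add_diff_eq)
qed

lemma smooth_sum_log_squared_bound:
  fixes \<delta> \<epsilon> :: real
  assumes "0 < \<delta>" "0 < \<epsilon>"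
  shows "\<exists>C x0. \<forall>x\<ge>x0. smooth_sum \<delta> x ((ln x)^2) \<le> C * x powr (- \<delta> / 2 + \<epsilon>)"
proof -
  define \<theta> where "\<theta> = min (1/2) (\<epsilon> / \<delta>)"
  have \<theta>: "0 < \<theta>" "\<theta> \<le> 1/2" "\<delta> * \<theta> \<le> \<epsilon>"
    using assms by (auto simp: \<theta>_def min_def field_simps)
  have "\<forall>\<^sub>F x in at_top. 3 * ln (1 + ln x) + 24 * ln x powr (1 - \<theta>) * ln (ln x) \<le> \<delta> * \<theta> / 2 * ln x"
    using \<theta>(1,2) assms by real_asymp
  moreover have "\<forall>\<^sub>F x in at_top. (x::real) \<ge> exp 1" by (rule eventually_ge_at_top)
  ultimately have "\<forall>\<^sub>F x in at_top. smooth_sum \<delta> x ((ln x)^2) \<le> 1 * x powr (- \<delta> / 2 + \<epsilon>)"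
  proof eventually_elim
    case (elim x)
    have x: "x > 0" using elim(2) by (rule less_le_trans[OF exp_gt_zero])
    then have "ln x \<ge> 1" using elim(2) by (simp add: ln_ge_iff)
    define R where "R = 3 * ln (1 + ln x) + 24 * ln x powr (1 - \<theta>) * ln (ln x)"
    have "smooth_sum \<delta> x ((ln x)^2) \<le> exp (R - \<delta> * (1 - \<theta>) / 2 * ln x)"
      unfolding R_def using \<theta> elim(2) by (intro smooth_sum_log_squared_le) auto
    also have "\<dots> \<le> exp ((- \<delta> / 2 + \<epsilon>) * ln x)"
    proof -
      have "\<delta> * \<theta> * ln x \<le> \<epsilon> * ln x" using \<theta>(3) \<open>ln x \<ge> 1\<close> by (intro mult_right_mono) auto
      with elim(1) show ?thesis unfolding R_def[symmetric] by (simp add: field_simps)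
    qed
    also have "\<dots> = x powr (- \<delta> / 2 + \<epsilon>)" using x by (simp add: powr_def)
    finally show ?case by simp
  qed
  then show ?thesis unfolding eventually_at_top_linorder by blast
qed

lemma rankin_root_parameter:
  fixes \<delta> L :: real and t :: nat
  assumes \<delta>: "0 < \<delta>" "\<delta> < 1" and t: "(48 / \<delta>)^2 \<le> real t"
    and L: "1 \<le> ln L" "2 * real t * ln L \<le> L"
  defines "a \<equiv> ln (\<delta> / 48 * real t)"
  shows "ln (real t) / 2 \<le> a" "0 \<le> a * real t / L" "a * real t / L \<le> 1/2"
proof -
  have "1 \<le> 48 / \<delta>" using \<delta> by (simp add: field_simps)
  then have "1 \<le> (48 / \<delta>)^2" by (rule one_le_power)
  then have t1: "real t \<ge> 1" using t by linarith
  have "real t * 1 \<le> real t * (2 * ln L)" using L by (intro mult_left_mono) auto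
  also have "\<dots> = 2 * real t * ln L" by simp
  also have "\<dots> \<le> L" by (rule L(2))
  finally have "real t \<le> L" by simp
  then have "L > 0" using t1 by linarith
  have "sqrt (real t) \<le> \<delta> / 48 * real t" using \<delta> t by (intro sqrt_le_mult) auto
  then show a: "ln (real t) / 2 \<le> a" using t1 by (simp add: a_def ln_sqrt[symmetric] ln_mono)
  moreover have "0 \<le> ln (real t)" using t1 by simp
  ultimately show "0 \<le> a * real t / L" using \<open>L > 0\<close> by simp
  have "a \<le> ln (real t)" using \<delta> t1 by (simp add: a_def ln_mono)
  also have "\<dots> \<le> ln L" using \<open>real t \<le> L\<close> t1 by simp
  finally have "a * (2 * real t) \<le> ln L * (2 * real t)" by (intro mult_right_mono) auto
  then have "a * real t \<le> L / 2" using L by (simp add: mult_ac)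
  then show "a * real t / L \<le> 1/2" using \<open>L > 0\<close> by (simp add: field_simps)
qed

text \<open>Rankin's parameter is chosen so that \<open>y powr \<alpha> = \<delta> t / 48\<close>, making the prime sum
  \<open>24 \<alpha> (y powr \<alpha>) ln y\<close> cost only half of the gain \<open>\<alpha> \<delta> ln x\<close>.\<close>
lemma smooth_sum_root_le:
  fixes \<delta> x :: real and t :: nat
  assumes \<delta>: "0 < \<delta>" "\<delta> < 1" and x: "x \<ge> exp (exp 1)"
    and y: "(ln x)^2 \<le> x powr (1 / real t)" and t: "(48 / \<delta>)^2 \<le> real t"
  shows "smooth_sum \<delta> x (x powr (1 / real t)) \<le> (1 + ln x) ^ 3 * exp (- \<delta> / 4 * real t * ln (real t))"
proof -
  define L where "L = ln x"
  define a where "a = ln (\<delta> / 48 * real t)"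
  define \<alpha> where "\<alpha> = a * real t / L"
  have "x > 0" "1 \<le> x" "exp 1 \<le> x" by (auto intro: order_trans[OF _ x] less_le_trans[OF _ x])
  then have "exp 1 \<le> L" using x by (simp add: L_def ln_ge_iff)
  moreover have "1 \<le> exp (1::real)" by simp
  ultimately have "L \<ge> 1" by linarith
  with \<open>exp 1 \<le> L\<close> have L: "L \<ge> 1" "ln L \<ge> 1" by (simp_all add: ln_ge_iff)
  have "1 \<le> 48 / \<delta>" using \<delta> by (simp add: field_simps)
  then have "0 < real t" using t one_le_power[of "48 / \<delta>" 2] by linarith
  have ln_y: "ln (x powr (1 / real t)) = L / real t" using \<open>x > 0\<close> by (simp add: L_def ln_powr)
  have "ln (L^2) \<le> ln (x powr (1 / real t))" using y L unfolding L_def by (intro ln_mono) auto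
  then have "2 * real t * ln L \<le> L" using L \<open>0 < real t\<close> by (simp add: ln_realpow ln_y L_def field_simps)
  note param = rankin_root_parameter[OF \<delta> t \<open>ln L \<ge> 1\<close> this, folded a_def \<alpha>_def]
  have "(x powr (1 / real t)) powr \<alpha> = exp (\<alpha> * ln (x powr (1 / real t)))"
    using \<open>x > 0\<close> by (simp add: powr_def)
  also have "\<alpha> * ln (x powr (1 / real t)) = a" using L \<open>0 < real t\<close> by (simp add: ln_y \<alpha>_def L_def)
  also have "exp a = \<delta> / 48 * real t" using \<delta> \<open>0 < real t\<close> by (simp add: a_def)
  finally have y_powr: "(x powr (1 / real t)) powr \<alpha> = \<delta> / 48 * real t" .
  have "\<alpha> * (24 * (x powr (1 / real t)) powr \<alpha> * ln (x powr (1 / real t)) - \<delta> * L)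
        = - \<delta> / 2 * a * real t"
    unfolding y_powr ln_y using L \<open>0 < real t\<close> by (simp add: \<alpha>_def field_simps)
  also have "\<dots> \<le> - \<delta> / 4 * real t * ln (real t)"
  proof -
    have "\<delta> / 2 * real t * (ln (real t) / 2) \<le> \<delta> / 2 * real t * a"
      using param(1) \<delta> by (intro mult_left_mono) auto
    then show ?thesis by (simp add: field_simps)
  qed
  finally have exponent: "\<alpha> * (24 * (x powr (1 / real t)) powr \<alpha> * ln (x powr (1 / real t)) - \<delta> * L)
                          \<le> - \<delta> / 4 * real t * ln (real t)" .
  have "1 \<le> L^2" using L by (simp add: one_le_power)
  then have "smooth_sum \<delta> x (x powr (1 / real t))
        \<le> (1 + L) ^ 3 * exp (\<alpha> * (24 * (x powr (1 / real t)) powr \<alpha> * ln (x powr (1 / real t)) - \<delta> * L))"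
    unfolding L_def using y param by (intro smooth_sum_le \<open>1 \<le> x\<close>) (auto simp: L_def)
  also have "\<dots> \<le> (1 + L) ^ 3 * exp (- \<delta> / 4 * real t * ln (real t))"
    using exponent L by (intro mult_left_mono) auto
  finally show ?thesis unfolding L_def .
qed

lemma smooth_sum_root_bound:
  fixes \<delta> :: real
  assumes "0 < \<delta>" "\<delta> < 1"
  shows "\<exists>c>0. \<exists>C x0. \<forall>x\<ge>x0. \<forall>t::nat. 1 \<le> t \<longrightarrow> x powr (1 / real t) \<ge> (ln x)^2 \<longrightarrow>
            smooth_sum \<delta> x (x powr (1 / real t)) \<le> C * (ln x)^3 * exp (- c * real t * ln (real t))"
proof -
  define c where "c = \<delta> / 4"
  define T where "T = (48 / \<delta>)^2"
  have "c > 0" using assms by (simp add: c_def)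
  have "1 \<le> 48 / \<delta>" using assms by (simp add: field_simps)
  then have "T \<ge> 1" unfolding T_def by (rule one_le_power)
  have main: "smooth_sum \<delta> x (x powr (1 / real t))
                \<le> 8 * exp (c * T * ln T) * (ln x)^3 * exp (- c * real t * ln (real t))"
    if x: "x \<ge> exp (exp 1)" and t: "1 \<le> t" and y: "(ln x)^2 \<le> x powr (1 / real t)" for x t
  proof -
    define E where "E = c * T * ln T - c * real t * ln (real t)"
    have "1 \<le> x" "exp 1 \<le> x" by (auto intro: order_trans[OF _ x])
    then have L: "ln x \<ge> 1" by (simp add: ln_ge_iff)
    have "1 \<le> (ln x)^2" using L by (simp add: one_le_power)
    then have "1 \<le> x powr (1 / real t)" using y by linarith
    have "smooth_sum \<delta> x (x powr (1 / real t)) \<le> (1 + ln x)^3 * exp E"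
    proof (cases "T \<le> real t")
      case True
      then have "smooth_sum \<delta> x (x powr (1 / real t)) \<le> (1 + ln x)^3 * exp (- c * real t * ln (real t))"
        using smooth_sum_root_le[OF assms x y] by (simp add: T_def c_def)
      also have "\<dots> \<le> (1 + ln x)^3 * exp E"
        using \<open>c > 0\<close> \<open>T \<ge> 1\<close> L by (intro mult_left_mono) (auto simp: E_def)
      finally show ?thesis .
    next
      case False
      then have "real t * ln (real t) \<le> T * ln T" using t by (intro mult_mono) auto
      then have "0 \<le> E" using \<open>c > 0\<close> by (simp add: E_def mult.assoc)
      have "smooth_sum \<delta> x (x powr (1 / real t)) \<le> (1 + ln x)^3 * 1"
        using smooth_sum_le[of x "x powr (1 / real t)" 0 \<delta>] \<open>1 \<le> x\<close> \<open>1 \<le> x powr (1 / real t)\<close> by simp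
      also have "\<dots> \<le> (1 + ln x)^3 * exp E" using \<open>0 \<le> E\<close> L by (intro mult_left_mono) auto
      finally show ?thesis .
    qed
    also have "\<dots> \<le> (2 * ln x)^3 * exp E" using L by (intro mult_right_mono power_mono) auto
    also have "\<dots> = 8 * exp (c * T * ln T) * (ln x)^3 * exp (- c * real t * ln (real t))"
      by (simp add: E_def power_mult_distrib exp_diff exp_minus field_simps)
    finally show ?thesis .
  qed
  show ?thesis using \<open>c > 0\<close> main by blast
qed

theorem lemma2p9:
  fixes \<delta> :: real
  assumes "0 < \<delta>" and "\<delta> < 1"
  shows "(\<forall>\<epsilon>>0. \<exists>C x0. \<forall>x\<ge>x0.
            smooth_sum \<delta> x ((ln x)^2) \<le> C * x powr (- \<delta> / 2 + \<epsilon>))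
       \<and> (\<exists>c>0. \<exists>C x0. \<forall>x\<ge>x0. \<forall>t::nat. 1 \<le> t \<longrightarrow> x powr (1 / real t) \<ge> (ln x)^2 \<longrightarrow>
            smooth_sum \<delta> x (x powr (1 / real t)) \<le> C * (ln x)^3 * exp (- c * real t * ln (real t)))"
  using smooth_sum_log_squared_bound[OF assms(1)] smooth_sum_root_bound[OF assms] by blast

end
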